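(* Let $B$ satisfy the conditions on the magnetic field in Assumption 5.1, let $\Phi$ be a flux, $A\in\mathcal A_{\Phi,2\pi}(B)$ and $\hat{\mathbf v}\in\mathbb S^2$. Then, in the sense of distributions on the open set $\Lambda_{\hat{\mathbf v}}$, $$\nabla_x\int_{-\infty}^\infty\hat{\mathbf v}\cdot A(x+\tau\hat{\mathbf v})\,d\tau=\int_{-\infty}^\infty\hat{\mathbf v}\times B(x+\tau\hat{\mathbf v})\,d\tau.$$
   Context: Solid torus $T=\mathbb S^1\times\overline D$; a handlebody with $k\ge1$ handles is a compact oriented 3-manifold with boundary diffeomorphic to the boundary connected sum of $k$ copies of $T$, one with $0$ handles is diffeomorphic to the closed unit ball. $K\subset\mathbb R^3$ compact 3-dimensional submanifold with smooth boundary with handlebody components $K_1,\dots,K_L$ ($N$ handles); $\Lambda=\mathbb R^3\setminus K$. For the $k$-th handle, $\hat\gamma_k=\tilde\gamma_k+\frac\varepsilon2\nu(\tilde\gamma_k)\subset\Lambda$, $\tilde\gamma_k=\partial B_k$ the boundary of a meridian disc, $\nu$ exterior unit normal, $\varepsilon$ small. Magnetic-field part of Assumption 5.1: $B$ bounded real vector field on $\overline\Lambda$, continuous near $\partial K$, $\operatorname{div}B=0$ in $\Lambda$, $\int_{\partial K_j}B\cdot dS=0$ for all $j$, $|B(x)|\le C(1+|x|)^{-\mu}$ with $\mu>2$, and $\operatorname{curl}B$ bounded with $|\operatorname{curl}B(x)|\le C(1+|x|)^{-\mu}$. $\mathcal A_{\Phi,2\pi}(B)$ ($\Phi\in\mathbb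 R^N$): continuous real vector fields $A$ on $\overline\Lambda$ with $|A(x)|\le C(1+|x|)^{-1}$, $\omega(r):=\sup_{x\in\Lambda,|x|\ge r}|A(x)\cdot x/|x||\in L^1(0,\infty)$, $\int_{\hat\gamma_j}A=\Phi_j+2\pi n_j(A)$, $n_j(A)\in\mathbb Z$, $\operatorname{curl}A=B$ in $\Lambda$. $\Lambda_{\hat{\mathbf v}}:=\{x\in\Lambda:x+\tau\hat{\mathbf v}\in\Lambda\ \forall\tau\in\mathbb R\}$. *)

theory Defs
  imports "HOL-Analysis.Analysis"
begin

definition pd :: "3 \<Rightarrow> (real^3 \<Rightarrow> real) \<Rightarrow> real^3 \<Rightarrow> real" where
  "pd i f x = frechet_derivative f (at x) (axis i 1)"

fun iter_pd :: "3 list \<Rightarrow> (real^3 \<Rightarrow> real) \<Rightarrow> real^3 \<Rightarrow> real" where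
  "iter_pd [] f = f"
| "iter_pd (i # is) f = pd i (iter_pd is f)"

text \<open>C-infinity on all of R^3: every iterated partial derivative is (Frechet) differentiable
  everywhere (hence all partial derivatives of all orders exist and are continuous).\<close>
definition smooth3 :: "(real^3 \<Rightarrow> real) \<Rightarrow> bool" where
  "smooth3 f \<longleftrightarrow> (\<forall>is x. iter_pd is f differentiable (at x))"

definition grad3 :: "(real^3 \<Rightarrow> real) \<Rightarrow> real^3 \<Rightarrow> real^3" where
  "grad3 f x = (\<chi> i. pd i f x)"

definition tsupport3 :: "(real^3 \<Rightarrow> 'b::zero) \<Rightarrow> (real^3) set" where
  "tsupport3 f = closure {x. f x \<noteq> 0}"

definition test_fun :: "(real^3) set \<Rightarrow> (real^3 \<Rightarrow> real) \<Rightarrow> bool" where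
  "test_fun U \<phi> \<longleftrightarrow> smooth3 \<phi> \<and> compact (tsupport3 \<phi>) \<and> tsupport3 \<phi> \<subseteq> U"

definition vtest_fun :: "(real^3) set \<Rightarrow> (real^3 \<Rightarrow> real^3) \<Rightarrow> bool" where
  "vtest_fun U \<psi> \<longleftrightarrow> (\<forall>i. smooth3 (\<lambda>x. \<psi> x $ i)) \<and> compact (tsupport3 \<psi>) \<and> tsupport3 \<psi> \<subseteq> U"

definition curl3 :: "(real^3 \<Rightarrow> real^3) \<Rightarrow> real^3 \<Rightarrow> real^3" where
  "curl3 \<psi> x = vector [
      pd 2 (\<lambda>y. \<psi> y $ 3) x - pd 3 (\<lambda>y. \<psi> y $ 2) x,
      pd 3 (\<lambda>y. \<psi> y $ 1) x - pd 1 (\<lambda>y. \<psi> y $ 3) x,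
      pd 1 (\<lambda>y. \<psi> y $ 2) x - pd 2 (\<lambda>y. \<psi> y $ 1) x]"

definition dist_curl :: "(real^3) set \<Rightarrow> (real^3 \<Rightarrow> real^3) \<Rightarrow> (real^3 \<Rightarrow> real^3) \<Rightarrow> bool" where
  "dist_curl U F G \<longleftrightarrow> (\<forall>\<psi>. vtest_fun U \<psi> \<longrightarrow>
     (\<integral>x. F x \<bullet> curl3 \<psi> x \<partial>lborel) = (\<integral>x. G x \<bullet> \<psi> x \<partial>lborel))"

definition dist_div_free :: "(real^3) set \<Rightarrow> (real^3 \<Rightarrow> real^3) \<Rightarrow> bool" where
  "dist_div_free U F \<longleftrightarrow> (\<forall>\<phi>. test_fun U \<phi> \<longrightarrow> (\<integral>x. F x \<bullet> grad3 \<phi> x \<partial>lborel) = 0)"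

definition dist_grad :: "(real^3) set \<Rightarrow> (real^3 \<Rightarrow> real) \<Rightarrow> (real^3 \<Rightarrow> real^3) \<Rightarrow> bool" where
  "dist_grad U f G \<longleftrightarrow> (\<forall>\<phi>. test_fun U \<phi> \<longrightarrow>
     (\<integral>x. f x *\<^sub>R grad3 \<phi> x \<partial>lborel) = - (\<integral>x. \<phi> x *\<^sub>R G x \<partial>lborel))"

text \<open>K is a compact set whose boundary is a smooth surface, K lying locally on one side:
  locally K = {rho \<le> 0} for a smooth rho with non-vanishing gradient.\<close>
definition smooth_boundary_domain :: "(real^3) set \<Rightarrow> bool" where
  "smooth_boundary_domain K \<longleftrightarrow> compact K \<and>
     (\<forall>p\<in>frontier K. \<exists>U \<rho>. open U \<and> p \<in> U \<and> smooth3 \<rho> \<and> (\<forall>x\<in>U. grad3 \<rho> x \<noteq> 0)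
        \<and> K \<inter> U = {x\<in>U. \<rho> x \<le> 0})"

definition line_int :: "(real^3 \<Rightarrow> real^3) \<Rightarrow> (real \<Rightarrow> real^3) \<Rightarrow> real" where
  "line_int A g = integral {0..1} (\<lambda>t. A (g t) \<bullet> vector_derivative g (at t))"

text \<open>Magnetic-field part of Assumption 5.1 (flux through the boundary components omitted).\<close>
definition magnetic_ok :: "(real^3) set \<Rightarrow> (real^3 \<Rightarrow> real^3) \<Rightarrow> real \<Rightarrow> bool" where
  "magnetic_ok \<Lambda> B \<mu> \<longleftrightarrow>
     B \<in> borel_measurable lborel \<and> bounded (B ` closure \<Lambda>) \<and>
     (\<exists>U. open U \<and> frontier \<Lambda> \<subseteq> U \<and> continuous_on (U \<inter> closure \<Lambda>) B) \<and>
     dist_div_free \<Lambda> B \<and> \<mu> > 2 \<and>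
     (\<exists>C. \<forall>x\<in>\<Lambda>. norm (B x) \<le> C * (1 + norm x) powr (-\<mu>)) \<and>
     (\<exists>cB C. cB \<in> borel_measurable lborel \<and> bounded (cB ` \<Lambda>) \<and> dist_curl \<Lambda> B cB \<and>
        (\<forall>x\<in>\<Lambda>. norm (cB x) \<le> C * (1 + norm x) powr (-\<mu>)))"

text \<open>The class A_{Phi,2pi}(B), with the handle curves given as closed paths gam j, j < N.\<close>
definition vpot_class ::
  "(real^3) set \<Rightarrow> nat \<Rightarrow> (nat \<Rightarrow> real \<Rightarrow> real^3) \<Rightarrow> (nat \<Rightarrow> real) \<Rightarrow> (real^3 \<Rightarrow> real^3)
     \<Rightarrow> (real^3 \<Rightarrow> real^3) set" where
  "vpot_class \<Lambda> N gam \<Phi> B = {A.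
     continuous_on (closure \<Lambda>) A \<and>
     (\<exists>C. \<forall>x\<in>closure \<Lambda>. norm (A x) \<le> C / (1 + norm x)) \<and>
     set_integrable lborel {0<..}
       (\<lambda>r::real. Sup {\<bar>A x \<bullet> (x /\<^sub>R norm x)\<bar> | x. x \<in> \<Lambda> \<and> norm x \<ge> r}) \<and>
     (\<forall>j<N. \<exists>n::int. line_int A (gam j) = \<Phi> j + 2 * pi * of_int n) \<and>
     dist_curl \<Lambda> A B}"

definition Lambda_dir :: "(real^3) set \<Rightarrow> real^3 \<Rightarrow> (real^3) set" where
  "Lambda_dir \<Lambda> v = {x\<in>\<Lambda>. \<forall>\<tau>::real. x + \<tau> *\<^sub>R v \<in> \<Lambda>}"

end

theory Submission
  imports Defs "HOL-Probability.Sinc_Integral"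
begin

(* For every shift t and coordinate k the
   vector field psi(y) = phi(y - t v) (v x e_k) is a test field in Lambda, and
   curl psi = grad phi(. - t v) x (v x e_k); testing curl A = B against it gives
     int (v.A(x+tv)) d_k phi(x) - A_k(x+tv) d_v phi(x) dx = - int phi(x) (v x B(x+tv))_k dx.
   We integrate this identity over t in R.  The decay |A| <= C/(1+|x|), the integrability of
   the radial sup omega of A.x/|x| and the decay |B| <= C(1+|x|)^(-mu), mu > 2, provide
   integrable majorants in t along all lines through the support of phi, so Fubini applies to
   the first and the last term.  The middle (boundary) term vanishes: truncated to |t| <= R it
   equals int A_k(x-Rv) phi - int A_k(x+Rv) phi by the fundamental theorem of calculus along v,
   which is O(1/R).  Reassembling the three coordinates yields the gradient identity. *)

lemma tsupport3_vanishes: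
  fixes g :: "real^3 \<Rightarrow> 'b::zero"
  assumes "x \<notin> tsupport3 g"
  shows "g x = 0"
  using assms closure_subset[of "{x. g x \<noteq> 0}"] unfolding tsupport3_def by blast

lemma pd_vanishes_outside_tsupport:
  assumes "x \<notin> tsupport3 g"
  shows "pd i g x = 0"
proof -
  have "open (- tsupport3 g)" unfolding tsupport3_def by auto
  then have "(g has_derivative (\<lambda>h. 0)) (at x)"
    by (rule has_derivative_transform_within_open[OF has_derivative_const])
       (auto simp: assms tsupport3_vanishes)
  then show ?thesis unfolding pd_def using frechet_derivative_at by metis
qed

lemma grad3_vanishes_outside_tsupport:
  assumes "x \<notin> tsupport3 g"
  shows "grad3 g x = 0"
  using pd_vanishes_outside_tsupport[OF assms] by (simp add: grad3_def vec_eq_iff)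

lemma smooth3_differentiable: "smooth3 g \<Longrightarrow> g differentiable (at x)"
  unfolding smooth3_def by (metis iter_pd.simps(1))

lemma smooth3_pd_differentiable: "smooth3 g \<Longrightarrow> pd i g differentiable (at x)"
  unfolding smooth3_def by (metis iter_pd.simps)

lemma smooth3_continuous: "smooth3 g \<Longrightarrow> continuous_on UNIV g"
  by (simp add: smooth3_differentiable continuous_at_imp_continuous_on differentiable_imp_continuous_within)

lemma smooth3_pd_continuous: "smooth3 g \<Longrightarrow> continuous_on UNIV (pd i g)"
  by (simp add: smooth3_pd_differentiable continuous_at_imp_continuous_on differentiable_imp_continuous_within)

lemma smooth3_directional_continuous: "smooth3 g \<Longrightarrow> continuous_on UNIV (\<lambda>x. grad3 g x \<bullet> v)"
  unfolding grad3_def inner_vec_def by (auto intro!: continuous_intros smooth3_pd_continuous)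

lemma frechet_derivative_eq_grad3:
  assumes "g differentiable (at z)"
  shows "frechet_derivative g (at z) h = grad3 g z \<bullet> h"
proof -
  have L: "linear (frechet_derivative g (at z))"
    using assms frechet_derivative_works has_derivative_linear by blast
  have "frechet_derivative g (at z) h = frechet_derivative g (at z) (\<Sum>i\<in>UNIV. h$i *\<^sub>R axis i 1)"
    using basis_expansion[of h] by (simp add: scalar_mult_eq_scaleR)
  also have "\<dots> = (\<Sum>i\<in>UNIV. h$i * frechet_derivative g (at z) (axis i 1))"
    using L by (simp add: linear_sum linear_scale)
  also have "\<dots> = grad3 g z \<bullet> h"
    by (simp add: grad3_def pd_def inner_vec_def mult.commute)
  finally show ?thesis .
qed

text \<open>Partial derivatives commute with translation and scaling; hence translated multiples of smooth
  functions are smooth.  This makes the shifted vector fields in the curl pairing admissible.\<close>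

lemma pd_scaled_translate:
  assumes "\<And>x. g differentiable (at x)"
  shows "pd i (\<lambda>y. c * g (y - w)) x = c * pd i g (x - w)"
proof -
  have "(g has_derivative frechet_derivative g (at (x - w))) (at (x - w))"
    using assms frechet_derivative_works by blast
  moreover have shift: "((\<lambda>y. y - w) has_derivative (\<lambda>h. h)) (at x)"
    by (auto intro!: derivative_eq_intros)
  ultimately have "((\<lambda>y. g (y - w)) has_derivative frechet_derivative g (at (x - w))) (at x)"
    using has_derivative_compose[OF shift, of g] by simp
  then have "((\<lambda>y. c * g (y - w)) has_derivative (\<lambda>h. c * frechet_derivative g (at (x - w)) h)) (at x)"
    by (rule has_derivative_mult_right)
  then show ?thesis unfolding pd_def using frechet_derivative_at by metis
qed

lemma iter_pd_scaled_translate: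
  assumes "smooth3 g"
  shows "iter_pd is (\<lambda>y. c * g (y - w)) = (\<lambda>y. c * iter_pd is g (y - w))"
proof (induction "is")
  case (Cons i "is")
  have "\<And>x. iter_pd is g differentiable (at x)" using assms unfolding smooth3_def by blast
  then show ?case by (simp add: Cons.IH fun_eq_iff pd_scaled_translate)
qed simp

lemma smooth3_scaled_translate:
  assumes "smooth3 g"
  shows "smooth3 (\<lambda>y. c * g (y - w))"
  unfolding smooth3_def iter_pd_scaled_translate[OF assms]
proof (intro allI)
  fix "is" x
  have "iter_pd is g differentiable (at (x - w))" using assms unfolding smooth3_def by blast
  then have "(\<lambda>y. iter_pd is g (y - w)) differentiable (at x)"
    using differentiable_compose[of "iter_pd is g" "\<lambda>y. y - w" x UNIV] by auto
  then show "(\<lambda>y. c * iter_pd is g (y - w)) differentiable (at x)"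
    by (simp add: differentiable_mult differentiable_const)
qed

lemma tsupport3_subset_translate:
  fixes \<psi> :: "real^3 \<Rightarrow> real^3"
  assumes "\<And>y. \<psi> y \<noteq> 0 \<Longrightarrow> \<phi> (y - w) \<noteq> (0::real)"
  shows "tsupport3 \<psi> \<subseteq> (\<lambda>x. w + x) ` tsupport3 \<phi>"
proof -
  have "{y. \<psi> y \<noteq> 0} \<subseteq> (\<lambda>x. w + x) ` {x. \<phi> x \<noteq> 0}"
    using assms by (auto intro!: image_eqI[of _ _ "_ - w"])
  then show ?thesis unfolding tsupport3_def closure_translation[symmetric] by (rule closure_mono)
qed

lemma integral_directional_derivative:
  fixes \<phi> :: "real^3 \<Rightarrow> real"
  assumes sm: "smooth3 \<phi>" and R: "R \<ge> 0"
  shows "(\<integral>t. indicator {-R..R} t * (grad3 \<phi> (y - t *\<^sub>R v) \<bullet> v) \<partial>lborel)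
       = \<phi> (y + R *\<^sub>R v) - \<phi> (y - R *\<^sub>R v)"
proof -
  define F where "F = (\<lambda>t. - \<phi> (y - t *\<^sub>R v))"
  have der: "(F has_vector_derivative (grad3 \<phi> (y - t *\<^sub>R v) \<bullet> v)) (at t within {-R..R})" for t
  proof -
    have "(\<phi> has_derivative frechet_derivative \<phi> (at (y - t *\<^sub>R v))) (at (y - t *\<^sub>R v))"
      using sm smooth3_differentiable frechet_derivative_works by blast
    moreover have line: "((\<lambda>s. y - s *\<^sub>R v) has_derivative (\<lambda>h. - (h *\<^sub>R v))) (at t)"
      by (auto intro!: derivative_eq_intros)
    ultimately have "(F has_derivative (\<lambda>h. - frechet_derivative \<phi> (at (y - t *\<^sub>R v)) (- (h *\<^sub>R v)))) (at t)"
      unfolding F_def using has_derivative_compose[OF line, of \<phi>] by (intro has_derivative_minus) simp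
    moreover have "(\<lambda>h. - frechet_derivative \<phi> (at (y - t *\<^sub>R v)) (- (h *\<^sub>R v)))
                 = (\<lambda>h. h *\<^sub>R (grad3 \<phi> (y - t *\<^sub>R v) \<bullet> v))"
      using frechet_derivative_eq_grad3[OF smooth3_differentiable[OF sm]] by (auto simp: fun_eq_iff)
    ultimately show ?thesis unfolding has_vector_derivative_def by (auto intro: has_derivative_at_withinI)
  qed
  have "continuous_on UNIV (\<lambda>t. grad3 \<phi> (y - t *\<^sub>R v) \<bullet> v)"
    by (rule continuous_on_compose2[OF smooth3_directional_continuous[of \<phi> v, OF sm]])
       (auto intro!: continuous_intros)
  then have "(\<integral>t. indicator {-R..R} t *\<^sub>R (grad3 \<phi> (y - t *\<^sub>R v) \<bullet> v) \<partial>lborel) = F R - F (-R)"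
    by (intro integral_FTC_atLeastAtMost[OF _ der]) (auto intro: continuous_on_subset simp: R)
  then show ?thesis unfolding F_def by simp
qed

lemma integral_translate:
  fixes f :: "'a::euclidean_space \<Rightarrow> real"
  assumes [measurable]: "f \<in> borel_measurable borel"
  shows "(\<integral>y. f y \<partial>lborel) = (\<integral>x. f (w + x) \<partial>lborel)"
proof -
  have "(\<integral>y. f y \<partial>lborel) = (\<integral>y. f y \<partial>(distr lborel borel ((+) w)))"
    by (simp add: lborel_distr_plus)
  also have "\<dots> = (\<integral>x. f (w + x) \<partial>lborel)"
    by (rule integral_distr) auto
  finally show ?thesis .
qed

lemma integrable_translate:
  fixes f :: "'a::euclidean_space \<Rightarrow> real"
  assumes [measurable]: "f \<in> borel_measurable borel"
  shows "integrable lborel (\<lambda>x. f (w + x)) \<longleftrightarrow> integrable lborel f"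
proof -
  have "integrable lborel f \<longleftrightarrow> integrable (distr lborel borel ((+) w)) f"
    by (simp add: lborel_distr_plus)
  also have "\<dots> \<longleftrightarrow> integrable lborel (\<lambda>x. f (w + x))"
    by (rule integrable_distr_eq) auto
  finally show ?thesis by simp
qed

lemma integral_vec_nth:
  fixes F :: "'a \<Rightarrow> real^'n"
  assumes "integrable M F"
  shows "(\<integral>x. F x \<partial>M) $ k = (\<integral>x. F x $ k \<partial>M)"
proof -
  have "(\<integral>x. F x \<bullet> axis k 1 \<partial>M) = (\<integral>x. F x \<partial>M) \<bullet> axis k 1"
    using assms by (rule integral_inner_left)
  then show ?thesis by (simp add: inner_axis)
qed

lemma integral_by_components:
  fixes F :: "'a \<Rightarrow> real^'n"
  assumes "\<And>k. integrable M (\<lambda>x. F x $ k)"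
  shows "(\<integral>x. F x \<partial>M) = (\<Sum>k\<in>UNIV. (\<integral>x. F x $ k \<partial>M) *\<^sub>R axis k 1)"
proof -
  have "F x = (\<Sum>k\<in>UNIV. (F x $ k) *\<^sub>R axis k 1)" for x
    using basis_expansion[of "F x"] by (simp add: scalar_mult_eq_scaleR)
  then have "(\<integral>x. F x \<partial>M) = (\<integral>x. (\<Sum>k\<in>UNIV. (F x $ k) *\<^sub>R axis k 1) \<partial>M)" by simp
  also have "\<dots> = (\<Sum>k\<in>UNIV. (\<integral>x. (F x $ k) *\<^sub>R axis k 1 \<partial>M))"
    by (rule Bochner_Integration.integral_sum) (use assms in auto)
  also have "\<dots> = (\<Sum>k\<in>UNIV. (\<integral>x. F x $ k \<partial>M) *\<^sub>R axis k 1)"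
    using assms by (simp add: integral_scaleR_left)
  finally show ?thesis .
qed

lemma borel_measurable_vec_nth_comp:
  fixes F :: "'a \<Rightarrow> real^'n"
  assumes "F \<in> borel_measurable M"
  shows "(\<lambda>x. F x $ k) \<in> borel_measurable M"
proof -
  have "(\<lambda>y::real^'n. y $ k) \<in> borel_measurable borel"
    by (intro borel_measurable_continuous_onI continuous_intros)
  with assms show ?thesis by (rule measurable_compose)
qed

lemma integrable_indicator_Icc: "integrable lborel (indicator {a..b::real} :: real \<Rightarrow> real)"
  using emeasure_compact_finite[OF compact_Icc[of a b]] by (intro integrable_real_indicator) auto

lemma integrable_inverse_1_plus_square_lborel: "integrable lborel (\<lambda>t::real. inverse (1 + t^2))"
  using integrable_inverse_1_plus_square by (simp add: set_integrable_def)

lemma integrable_compact_support: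
  fixes g :: "'a::euclidean_space \<Rightarrow> real"
  assumes c: "continuous_on UNIV g" and S: "compact S" and z: "\<And>x. x \<notin> S \<Longrightarrow> g x = 0"
  shows "integrable lborel g"
proof -
  have "(\<lambda>x. indicator S x *\<^sub>R g x) = g" using z by (auto simp: indicator_def fun_eq_iff)
  then show ?thesis
    using borel_integrable_compact[OF S continuous_on_subset[OF c]] by auto
qed

lemma bounded_compact_support:
  fixes g :: "'a::topological_space \<Rightarrow> real"
  assumes c: "continuous_on UNIV g" and S: "compact S" and z: "\<And>x. x \<notin> S \<Longrightarrow> g x = 0"
  shows "\<exists>b\<ge>0. \<forall>x. \<bar>g x\<bar> \<le> b"
proof -
  have "compact (g ` S)" by (rule compact_continuous_image[OF continuous_on_subset[OF c subset_UNIV] S])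
  then obtain b where b: "\<forall>y\<in>g ` S. norm y \<le> b" using compact_imp_bounded bounded_iff by metis
  have "\<bar>g x\<bar> \<le> \<bar>b\<bar>" for x
  proof (cases "x \<in> S")
    case True then have "norm (g x) \<le> b" using b by blast
    then show ?thesis by simp
  next
    case False then show ?thesis using z by simp
  qed
  then show ?thesis by (intro exI[of _ "\<bar>b\<bar>"]) simp
qed

lemma integrable_bounded_factor:
  fixes f g :: "'a \<Rightarrow> real"
  assumes f: "integrable M f" and g: "g \<in> borel_measurable M" and bound: "\<And>x. \<bar>g x\<bar> \<le> C"
  shows "integrable M (\<lambda>x. g x * f x)"
proof (rule Bochner_Integration.integrable_bound[OF _ borel_measurable_times[OF g]])
  show "integrable M (\<lambda>x. C * f x)" using f by simp
  have "\<bar>g x\<bar> * \<bar>f x\<bar> \<le> \<bar>C\<bar> * \<bar>f x\<bar>" for x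
    using bound[of x] by (intro mult_right_mono) auto
  then show "AE x in M. norm (g x * f x) \<le> norm (C * f x)"
    by (simp add: abs_mult)
qed (use f borel_measurable_integrable in auto)

lemma smooth3_compact_support_integrable:
  assumes sm: "smooth3 \<phi>" and cS: "compact (tsupport3 \<phi>)"
  shows "integrable lborel \<phi>"
    and "integrable lborel (pd k \<phi>)"
    and "integrable lborel (\<lambda>x. grad3 \<phi> x \<bullet> v)"
  by (intro integrable_compact_support[OF _ cS] smooth3_continuous smooth3_pd_continuous
      smooth3_directional_continuous sm;
      simp add: tsupport3_vanishes pd_vanishes_outside_tsupport grad3_vanishes_outside_tsupport)+

lemma fubini_product_majorant:
  fixes G :: "real \<Rightarrow> 'a::euclidean_space \<Rightarrow> real"
  assumes Gm: "case_prod G \<in> borel_measurable (lborel \<Otimes>\<^sub>M lborel)"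
    and h: "integrable lborel h" and D: "integrable lborel D"
    and bd: "\<And>t x. \<bar>G t x\<bar> \<le> h t * \<bar>D x\<bar>"
  shows "integrable lborel (\<lambda>t. \<integral>x. G t x \<partial>lborel)"
    and "integrable lborel (\<lambda>x. \<integral>t. G t x \<partial>lborel)"
    and "(\<integral>t. (\<integral>x. G t x \<partial>lborel) \<partial>lborel) = (\<integral>x. (\<integral>t. G t x \<partial>lborel) \<partial>lborel)"
proof -
  have pps: "pair_sigma_finite (lborel :: real measure) (lborel :: 'a measure)"
    by (simp add: pair_sigma_finite_def lborel.sigma_finite_measure_axioms)
  have [measurable]: "h \<in> borel_measurable borel" "D \<in> borel_measurable borel"
    using h D by auto
  have "integrable (lborel \<Otimes>\<^sub>M lborel) (\<lambda>(t, x). h t * \<bar>D x\<bar>)"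
    by (rule pair_sigma_finite.Fubini_integrable[OF pps]) (use h D in \<open>auto simp: abs_mult\<close>)
  then have GI: "integrable (lborel \<Otimes>\<^sub>M lborel) (case_prod G)"
    by (rule Bochner_Integration.integrable_bound[OF _ Gm])
       (use bd in \<open>auto split: prod.splits intro!: AE_I2 order.trans[OF _ abs_ge_self]\<close>)
  show "integrable lborel (\<lambda>t. \<integral>x. G t x \<partial>lborel)" using pair_sigma_finite.integrable_fst[OF pps GI] by simp
  show "integrable lborel (\<lambda>x. \<integral>t. G t x \<partial>lborel)" using pair_sigma_finite.integrable_snd[OF pps GI] by simp
  show "(\<integral>t. (\<integral>x. G t x \<partial>lborel) \<partial>lborel) = (\<integral>x. (\<integral>t. G t x \<partial>lborel) \<partial>lborel)"
    using pair_sigma_finite.Fubini_integral[OF pps GI] by simp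
qed

lemma norm_cross3_le: "norm (cross3 v b) \<le> norm v * norm b"
proof -
  have "(norm (cross3 v b))^2 \<le> (norm v * norm b)^2" using norm_cross_dot[of v b]
    by (metis le_add_same_cancel1 zero_le_power2)
  then show ?thesis by (simp add: power2_le_iff_abs_le)
qed

lemma inner_cross3_cross3_axis:
  fixes a d v :: "real^3"
  shows "a \<bullet> cross3 d (cross3 v (axis k 1)) = (a \<bullet> v) * (d $ k) - (a $ k) * (d \<bullet> v)"
  using exhaust_3[of k] by (auto simp: cross3_simps axis_def)

lemma inner_cross3_axis:
  fixes b v :: "real^3"
  shows "b \<bullet> cross3 v (axis k 1) = - (cross3 v b $ k)"
  using exhaust_3[of k] by (auto simp: cross3_simps axis_def)

lemma borel_measurable_cross3:
  fixes B :: "'a \<Rightarrow> real^3"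
  assumes [measurable]: "B \<in> borel_measurable M"
  shows "(\<lambda>y. cross3 v (B y)) \<in> borel_measurable M"
proof -
  have "(\<lambda>y::real^3. cross3 v y) \<in> borel_measurable borel"
    by (intro borel_measurable_continuous_onI continuous_intros continuous_on_cross)
  with assms show ?thesis by (rule measurable_compose)
qed

text \<open>The curl hypothesis tested against psi(y) = phi(y - w) (v x e_k).\<close>

lemma curl_pairing_translate:
  fixes \<Lambda> :: "(real^3) set" and A B :: "real^3 \<Rightarrow> real^3"
  assumes dc: "dist_curl \<Lambda> A B" and sm: "smooth3 \<phi>" and cp: "compact (tsupport3 \<phi>)"
    and sub: "(\<lambda>x. w + x) ` tsupport3 \<phi> \<subseteq> \<Lambda>"
  shows "(\<integral>y. (A y \<bullet> v) * pd k \<phi> (y - w) - A y $ k * (grad3 \<phi> (y - w) \<bullet> v) \<partial>lborel)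
       = (\<integral>y. - (\<phi> (y - w) * (cross3 v (B y) $ k)) \<partial>lborel)"
proof -
  define c where "c = cross3 v (axis k 1)"
  define \<psi> where "\<psi> = (\<lambda>y. (\<chi> j. c $ j * \<phi> (y - w)) :: real^3)"
  have comp: "\<And>j. (\<lambda>y. \<psi> y $ j) = (\<lambda>y. c $ j * \<phi> (y - w))" unfolding \<psi>_def by simp
  have ts: "tsupport3 \<psi> \<subseteq> (\<lambda>x. w + x) ` tsupport3 \<phi>"
    by (rule tsupport3_subset_translate) (auto simp: \<psi>_def vec_eq_iff)
  moreover have "compact ((\<lambda>x. w + x) ` tsupport3 \<phi>)" using cp by (rule compact_translation)
  ultimately have "compact (tsupport3 \<psi>)"
    by (metis closed_closure compact_Int_closed inf.absorb_iff2 tsupport3_def)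
  then have "vtest_fun \<Lambda> \<psi>"
    unfolding vtest_fun_def comp using smooth3_scaled_translate[OF sm] ts sub by auto
  then have "(\<integral>y. A y \<bullet> curl3 \<psi> y \<partial>lborel) = (\<integral>y. B y \<bullet> \<psi> y \<partial>lborel)"
    using dc unfolding dist_curl_def by blast
  moreover have "A y \<bullet> curl3 \<psi> y = (A y \<bullet> v) * pd k \<phi> (y - w) - A y $ k * (grad3 \<phi> (y - w) \<bullet> v)" for y
  proof -
    have "curl3 \<psi> y = cross3 (grad3 \<phi> (y - w)) c"
      unfolding curl3_def comp pd_scaled_translate[OF smooth3_differentiable[OF sm]]
      by (simp add: cross3_def grad3_def mult.commute)
    then show ?thesis by (simp add: c_def inner_cross3_cross3_axis grad3_def)
  qed
  moreover have "B y \<bullet> \<psi> y = - (\<phi> (y - w) * (cross3 v (B y) $ k))" for y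
  proof -
    have "\<psi> y = \<phi> (y - w) *\<^sub>R c" unfolding \<psi>_def by (simp add: vec_eq_iff mult.commute)
    then show ?thesis unfolding c_def by (simp add: inner_cross3_axis)
  qed
  ultimately show ?thesis by simp
qed

text \<open>The same identity written in the variable x = y - t v, with A replaced by a globally measurable
  function A1 that agrees with A on Lambda (the integrands only see Lambda).\<close>

lemma curl_pairing_on_line:
  fixes \<Lambda> :: "(real^3) set" and A A1 B :: "real^3 \<Rightarrow> real^3"
  assumes dc: "dist_curl \<Lambda> A B" and sm: "smooth3 \<phi>" and cS: "compact (tsupport3 \<phi>)"
    and on_line: "\<And>x. x \<in> tsupport3 \<phi> \<Longrightarrow> x + t *\<^sub>R v \<in> \<Lambda>"
    and A1m[measurable]: "A1 \<in> borel_measurable borel" and A1eq: "\<And>y. y \<in> \<Lambda> \<Longrightarrow> A1 y = A y"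
    and A1b: "\<And>y. norm (A1 y) \<le> C"
    and Bm[measurable]: "B \<in> borel_measurable borel" and v: "norm v = 1"
  shows "(\<integral>x. (v \<bullet> A1 (x + t *\<^sub>R v)) * pd k \<phi> x \<partial>lborel)
           - (\<integral>x. A1 (x + t *\<^sub>R v) $ k * (grad3 \<phi> x \<bullet> v) \<partial>lborel)
       = (\<integral>x. - (\<phi> x * (cross3 v (B (x + t *\<^sub>R v)) $ k)) \<partial>lborel)"
proof -
  define w where "w = t *\<^sub>R v"
  define D where "D = pd k \<phi>"
  define Dv where "Dv = (\<lambda>x. grad3 \<phi> x \<bullet> v)"
  have [measurable]: "D \<in> borel_measurable borel" "Dv \<in> borel_measurable borel"
    "\<phi> \<in> borel_measurable borel"
    unfolding D_def Dv_def
    by (intro borel_measurable_continuous_onI smooth3_continuous smooth3_pd_continuous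
        smooth3_directional_continuous sm)+
  have [measurable]: "(\<lambda>y. A1 y $ k) \<in> borel_measurable borel"
    "(\<lambda>y. cross3 v (B y) $ k) \<in> borel_measurable borel"
    by (intro borel_measurable_vec_nth_comp borel_measurable_cross3 A1m Bm)+
  have "(\<lambda>x. w + x) ` tsupport3 \<phi> \<subseteq> \<Lambda>" using on_line unfolding w_def by (auto simp: add.commute)
  note pairing = curl_pairing_translate[OF dc sm cS this, of v k]
  have "(A y \<bullet> v) * pd k \<phi> (y - w) - A y $ k * (grad3 \<phi> (y - w) \<bullet> v)
      = (A1 y \<bullet> v) * D (y - w) - A1 y $ k * Dv (y - w)" for y
  proof (cases "y - w \<in> tsupport3 \<phi>")
    case True
    then have "y \<in> \<Lambda>" using on_line[OF True] unfolding w_def by simp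
    then show ?thesis using A1eq unfolding D_def Dv_def by simp
  qed (simp add: D_def Dv_def pd_vanishes_outside_tsupport grad3_vanishes_outside_tsupport)
  then have "(\<integral>y. (A y \<bullet> v) * pd k \<phi> (y - w) - A y $ k * (grad3 \<phi> (y - w) \<bullet> v) \<partial>lborel)
      = (\<integral>y. (A1 y \<bullet> v) * D (y - w) - A1 y $ k * Dv (y - w) \<partial>lborel)" by simp
  also have "\<dots> = (\<integral>x. (A1 (w + x) \<bullet> v) * D (w + x - w) - A1 (w + x) $ k * Dv (w + x - w) \<partial>lborel)"
    by (rule integral_translate) measurable
  also have "\<dots> = (\<integral>x. (A1 (w + x) \<bullet> v) * D x - A1 (w + x) $ k * Dv x \<partial>lborel)" by simp
  also have "\<dots> = (\<integral>x. (A1 (w + x) \<bullet> v) * D x \<partial>lborel) - (\<integral>x. A1 (w + x) $ k * Dv x \<partial>lborel)"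
  proof (rule Bochner_Integration.integral_diff)
    have Av: "\<bar>A1 y \<bullet> v\<bar> \<le> C" and Ak: "\<bar>A1 y $ k\<bar> \<le> C" for y
      using Cauchy_Schwarz_ineq2[of "A1 y" v] component_le_norm_cart[of "A1 y" k] A1b[of y] v
      by auto
    have integrable: "integrable lborel D" "integrable lborel Dv"
      unfolding D_def Dv_def using smooth3_compact_support_integrable[OF sm cS] by auto
    show "integrable lborel (\<lambda>x. (A1 (w + x) \<bullet> v) * D x)"
      by (rule integrable_bounded_factor[OF integrable(1)]) (measurable, rule Av)
    show "integrable lborel (\<lambda>x. A1 (w + x) $ k * Dv x)"
      by (rule integrable_bounded_factor[OF integrable(2)]) (measurable, rule Ak)
  qed
  also have "\<dots> = (\<integral>x. (v \<bullet> A1 (x + t *\<^sub>R v)) * pd k \<phi> x \<partial>lborel)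
           - (\<integral>x. A1 (x + t *\<^sub>R v) $ k * (grad3 \<phi> x \<bullet> v) \<partial>lborel)"
    unfolding w_def D_def Dv_def by (simp add: inner_commute add.commute)
  finally have lhs: "(\<integral>y. (A y \<bullet> v) * pd k \<phi> (y - w) - A y $ k * (grad3 \<phi> (y - w) \<bullet> v) \<partial>lborel)
      = (\<integral>x. (v \<bullet> A1 (x + t *\<^sub>R v)) * pd k \<phi> x \<partial>lborel)
           - (\<integral>x. A1 (x + t *\<^sub>R v) $ k * (grad3 \<phi> x \<bullet> v) \<partial>lborel)" .
  have "(\<integral>y. - (\<phi> (y - w) * (cross3 v (B y) $ k)) \<partial>lborel)
      = (\<integral>x. - (\<phi> (w + x - w) * (cross3 v (B (w + x)) $ k)) \<partial>lborel)"
    by (rule integral_translate) measurable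
  also have "\<dots> = (\<integral>x. - (\<phi> x * (cross3 v (B (x + t *\<^sub>R v)) $ k)) \<partial>lborel)"
    unfolding w_def by (simp add: add.commute)
  finally show ?thesis using pairing lhs by simp
qed

definition radial_sup :: "(real^3) set \<Rightarrow> (real^3 \<Rightarrow> real^3) \<Rightarrow> real \<Rightarrow> real" where
  "radial_sup \<Lambda> A r = Sup {\<bar>A x \<bullet> (x /\<^sub>R norm x)\<bar> | x. x \<in> \<Lambda> \<and> norm x \<ge> r}"

lemma inverse_decay_imp_bounded:
  fixes a :: "'a::real_normed_vector" and y :: "'b::real_normed_vector"
  assumes "norm a \<le> C / (1 + norm y)"
  shows "0 \<le> C" and "norm a \<le> C"
proof -
  have pos: "0 < 1 + norm y" by (simp add: add_pos_nonneg)
  then show C: "0 \<le> C" using assms norm_ge_zero[of a] by (smt (verit) divide_neg_pos)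
  have "C / (1 + norm y) \<le> C / 1" using C pos by (intro divide_left_mono) auto
  then show "norm a \<le> C" using assms by simp
qed

lemma radial_component_le_radial_sup:
  assumes A_dec: "\<forall>x\<in>\<Lambda>. norm (A x) \<le> C / (1 + norm x)" and y: "y \<in> \<Lambda>" "norm y \<ge> r"
  shows "\<bar>A y \<bullet> (y /\<^sub>R norm y)\<bar> \<le> radial_sup \<Lambda> A r"
  unfolding radial_sup_def
proof (rule cSup_upper)
  show "\<bar>A y \<bullet> (y /\<^sub>R norm y)\<bar> \<in> {\<bar>A x \<bullet> (x /\<^sub>R norm x)\<bar> |x. x \<in> \<Lambda> \<and> r \<le> norm x}"
    using y by blast
  have "\<bar>A z \<bullet> (z /\<^sub>R norm z)\<bar> \<le> C" if "z \<in> \<Lambda>" for z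
  proof -
    have "\<bar>A z \<bullet> (z /\<^sub>R norm z)\<bar> \<le> norm (A z) * norm (z /\<^sub>R norm z)" by (rule Cauchy_Schwarz_ineq2)
    also have "\<dots> \<le> norm (A z) * 1" by (intro mult_left_mono) (cases "z = 0", auto)
    also have "\<dots> \<le> C" using inverse_decay_imp_bounded(2) A_dec that by force
    finally show ?thesis .
  qed
  then show "bdd_above {\<bar>A x \<bullet> (x /\<^sub>R norm x)\<bar> |x. x \<in> \<Lambda> \<and> r \<le> norm x}"
    by (intro bdd_aboveI[of _ C]) blast
qed

lemma unit_direction_deviation:
  fixes x v y :: "real^3" and t s :: real
  assumes v: "norm v = 1" and s: "\<bar>s\<bar> = 1" and st: "s * \<bar>t\<bar> = t"
    and y: "y = x + t *\<^sub>R v" and y0: "y \<noteq> 0"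
  shows "norm (s *\<^sub>R v - y /\<^sub>R norm y) \<le> 2 * norm x / norm y"
proof -
  have ny: "norm y > 0" using y0 by simp
  have "s *\<^sub>R v - y /\<^sub>R norm y = (1 / norm y) *\<^sub>R ((s * norm y - t) *\<^sub>R v - x)"
    using ny by (simp add: y algebra_simps divide_simps)
  then have e: "norm (s *\<^sub>R v - y /\<^sub>R norm y) = norm ((s * norm y - t) *\<^sub>R v - x) / norm y"
    using ny by simp
  have "\<bar>norm y - norm (t *\<^sub>R v)\<bar> \<le> norm (y - t *\<^sub>R v)" by (rule norm_triangle_ineq3)
  then have "\<bar>norm y - \<bar>t\<bar>\<bar> \<le> norm x" using y v by simp
  moreover have "s * norm y - t = s * (norm y - \<bar>t\<bar>)" using st by (simp add: algebra_simps)
  ultimately have "\<bar>s * norm y - t\<bar> \<le> norm x" using s by (simp add: abs_mult)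
  then have "norm ((s * norm y - t) *\<^sub>R v - x) \<le> 2 * norm x"
    using v norm_triangle_ineq4[of "(s * norm y - t) *\<^sub>R v" x] by simp
  then show ?thesis unfolding e using ny by (simp add: divide_right_mono)
qed

lemma product_tail_bound:
  fixes a b C M ny t :: real
  assumes C: "C \<ge> 0" and M: "M \<ge> 0" and a: "0 \<le> a" "a \<le> 2 * M / ny"
    and b: "0 \<le> b" "b \<le> C / (1 + ny)" and ny: "ny \<ge> \<bar>t\<bar> / 2" and t: "\<bar>t\<bar> \<ge> 1"
  shows "a * b \<le> 16 * M * C * inverse (1 + t^2)"
proof -
  have ny0: "ny > 0" using ny t by linarith
  have "a * b \<le> (2 * M / ny) * (C / (1 + ny))" using a b by (intro mult_mono) auto
  also have "\<dots> \<le> (2 * M / ny) * (C / ny)"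
    using ny0 C M by (intro mult_left_mono divide_left_mono) auto
  also have "\<dots> = 2 * M * C / ny^2" by (simp add: power2_eq_square)
  also have "\<dots> \<le> 2 * M * C / (t^2 / 4)"
  proof (rule divide_left_mono)
    have "(\<bar>t\<bar> / 2)^2 \<le> ny^2" using ny by (intro power_mono) auto
    then show "t^2 / 4 \<le> ny^2" by (simp add: power_divide)
  qed (use C M t ny0 in auto)
  also have "\<dots> = 8 * M * C / t^2" by simp
  also have "\<dots> \<le> 8 * M * C * (2 / (1 + t^2))"
  proof -
    have "t^2 \<ge> 1" using t by (metis abs_ge_zero one_le_power power2_abs)
    then have "1 / t^2 \<le> 2 / (1 + t^2)" by (simp add: divide_simps)
    then show ?thesis using C M
      by (metis (no_types, lifting) mult_left_mono split_mult_pos_le times_divide_eq_right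
          mult.right_neutral zero_le_numeral mult_nonneg_nonneg)
  qed
  also have "\<dots> = 16 * M * C * inverse (1 + t^2)" by (simp add: divide_simps)
  finally show ?thesis .
qed

lemma potential_far_along_line:
  fixes A :: "real^3 \<Rightarrow> real^3" and x v :: "real^3"
  assumes v: "norm v = 1" and A_dec: "\<forall>x\<in>\<Lambda>. norm (A x) \<le> C / (1 + norm x)"
    and M: "M \<ge> 0" and x: "norm x \<le> M" and y: "x + t *\<^sub>R v \<in> \<Lambda>" and t: "\<bar>t\<bar> > 2 * M + 1"
  shows "\<bar>v \<bullet> A (x + t *\<^sub>R v)\<bar> \<le> radial_sup \<Lambda> A (\<bar>t\<bar> - M) + 16 * M * C * inverse (1 + t^2)"
proof -
  define y where "y = x + t *\<^sub>R v"
  define s where "s = sgn t"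
  have Ay: "norm (A y) \<le> C / (1 + norm y)" using A_dec y y_def by blast
  have C0: "C \<ge> 0" by (rule inverse_decay_imp_bounded(1)[OF Ay])
  have s1: "\<bar>s\<bar> = 1" using t M by (auto simp: s_def abs_sgn)
  have st: "s * \<bar>t\<bar> = t" by (simp add: s_def sgn_mult_abs)
  have "\<bar>t\<bar> = norm (t *\<^sub>R v)" using v by simp
  also have "\<dots> \<le> norm y + norm x" using norm_triangle_ineq4[of y x] by (simp add: y_def)
  finally have nyt: "norm y \<ge> \<bar>t\<bar> - M" using x by linarith
  then have ny2: "norm y \<ge> \<bar>t\<bar> / 2" and y0: "y \<noteq> 0" using t M by auto
  have dev: "norm (s *\<^sub>R v - y /\<^sub>R norm y) \<le> 2 * M / norm y"
    using unit_direction_deviation[OF v s1 st y_def y0] x y0 by (smt (verit) divide_right_mono norm_ge_zero)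
  have "\<bar>v \<bullet> A y\<bar> = \<bar>(s *\<^sub>R v) \<bullet> A y\<bar>" using s1 by (simp add: abs_mult)
  also have "(s *\<^sub>R v) \<bullet> A y = A y \<bullet> (y /\<^sub>R norm y) + (s *\<^sub>R v - y /\<^sub>R norm y) \<bullet> A y"
    unfolding inner_diff_left by (simp add: inner_commute)
  finally have "\<bar>v \<bullet> A y\<bar> \<le> \<bar>A y \<bullet> (y /\<^sub>R norm y)\<bar> + norm (s *\<^sub>R v - y /\<^sub>R norm y) * norm (A y)"
    using Cauchy_Schwarz_ineq2[of "s *\<^sub>R v - y /\<^sub>R norm y" "A y"] by linarith
  moreover have "\<bar>A y \<bullet> (y /\<^sub>R norm y)\<bar> \<le> radial_sup \<Lambda> A (\<bar>t\<bar> - M)"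
    using radial_component_le_radial_sup[OF A_dec] y nyt unfolding y_def by blast
  moreover have "norm (s *\<^sub>R v - y /\<^sub>R norm y) * norm (A y) \<le> 16 * M * C * inverse (1 + t^2)"
    by (rule product_tail_bound[OF C0 M _ dev _ Ay ny2]) (use t M in auto)
  ultimately show ?thesis unfolding y_def by linarith
qed

lemma potential_line_majorant:
  fixes A :: "real^3 \<Rightarrow> real^3" and \<Lambda> :: "(real^3) set" and v :: "real^3"
  assumes v: "norm v = 1" and M: "M \<ge> 0" and A_dec: "\<forall>x\<in>\<Lambda>. norm (A x) \<le> C / (1 + norm x)"
    and \<omega>_int: "set_integrable lborel {0<..} (radial_sup \<Lambda> A)"
  shows "\<exists>h. integrable lborel h \<and>
           (\<forall>x t. norm x \<le> M \<longrightarrow> x + t *\<^sub>R v \<in> \<Lambda> \<longrightarrow> \<bar>v \<bullet> A (x + t *\<^sub>R v)\<bar> \<le> h t)"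
proof -
  define w where "w = (\<lambda>r. indicator {0<..} r * radial_sup \<Lambda> A r)"
  define L where "L = 2 * M + 1"
  define K where "K = \<bar>C\<bar> * (1 + L^2) + 16 * M * \<bar>C\<bar>"
  define h where "h = (\<lambda>t. K * inverse (1 + t^2) + \<bar>w (t - M)\<bar> + \<bar>w (- t - M)\<bar>)"
  have "integrable lborel w" using \<omega>_int unfolding set_integrable_def w_def by simp
  then have "integrable lborel (\<lambda>t. w (t - M))" "integrable lborel (\<lambda>t. w (- t - M))"
    using lborel_integrable_real_affine[of w 1 "-M"] lborel_integrable_real_affine[of w "-1" "-M"]
    by (simp_all add: add.commute)
  then have "integrable lborel h"
    unfolding h_def using integrable_inverse_1_plus_square_lborel
    by (intro Bochner_Integration.integrable_add integrable_mult_right Bochner_Integration.integrable_abs)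
  moreover have "\<bar>v \<bullet> A (x + t *\<^sub>R v)\<bar> \<le> h t" if x: "norm x \<le> M" and y: "x + t *\<^sub>R v \<in> \<Lambda>" for x t
  proof -
    have Ay: "norm (A (x + t *\<^sub>R v)) \<le> C" and C0: "C \<ge> 0"
      using inverse_decay_imp_bounded A_dec y by blast+
    have pos: "0 < inverse (1 + t^2)" by (simp add: add_pos_nonneg)
    have near: "K * inverse (1 + t^2) \<le> h t" unfolding h_def by simp
    show ?thesis
    proof (cases "\<bar>t\<bar> \<le> L")
      case True
      then have "t^2 \<le> L^2" by (metis abs_ge_zero power2_abs power_mono)
      then have "C \<le> C * (1 + L^2) * inverse (1 + t^2)"
        using C0 by (simp add: field_simps add_pos_nonneg mult_left_mono)
      also have "\<dots> \<le> K * inverse (1 + t^2)"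
        unfolding K_def using C0 M pos by (intro mult_right_mono) auto
      finally show ?thesis
        using Cauchy_Schwarz_ineq2[of v "A (x + t *\<^sub>R v)"] v Ay near by simp
    next
      case False
      have "16 * M * C * inverse (1 + t^2) \<le> K * inverse (1 + t^2)"
        unfolding K_def using C0 M pos by (intro mult_right_mono) auto
      moreover have "radial_sup \<Lambda> A (\<bar>t\<bar> - M) \<le> \<bar>w (t - M)\<bar> + \<bar>w (- t - M)\<bar>"
        using False M unfolding L_def w_def by (cases "t > 0") auto
      ultimately show ?thesis
        using potential_far_along_line[OF v A_dec M x y] False unfolding L_def h_def by linarith
    qed
  qed
  ultimately show ?thesis by blast
qed

lemma field_line_majorant:
  fixes B :: "real^3 \<Rightarrow> real^3" and \<Lambda> :: "(real^3) set" and v :: "real^3"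
  assumes v: "norm v = 1" and M: "M \<ge> 0" and mu: "\<mu> > 2"
    and B_dec: "\<forall>x\<in>\<Lambda>. norm (B x) \<le> C * (1 + norm x) powr (-\<mu>)"
  shows "\<exists>h. integrable lborel h \<and>
           (\<forall>x t. norm x \<le> M \<longrightarrow> x + t *\<^sub>R v \<in> \<Lambda> \<longrightarrow> norm (B (x + t *\<^sub>R v)) \<le> h t)"
proof -
  define h where "h = (\<lambda>t::real. \<bar>C\<bar> * (1 + M)^2 * inverse (1 + t^2))"
  have "integrable lborel h"
    unfolding h_def using integrable_inverse_1_plus_square_lborel by (intro integrable_mult_right)
  moreover have "norm (B (x + t *\<^sub>R v)) \<le> h t" if x: "norm x \<le> M" and y: "x + t *\<^sub>R v \<in> \<Lambda>" for x t
  proof -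
    define y where "y = x + t *\<^sub>R v"
    have pos: "0 < 1 + norm y" by (simp add: add_pos_nonneg)
    have "\<bar>t\<bar> = norm (t *\<^sub>R v)" using v by simp
    also have "\<dots> \<le> norm y + norm x" using norm_triangle_ineq4[of y x] by (simp add: y_def)
    finally have "\<bar>t\<bar> \<le> norm y + M" using x by linarith
    moreover have "(1 + M) * (1 + norm y) = 1 + M + norm y + M * norm y" by (simp add: algebra_simps)
    moreover have "M * norm y \<ge> 0" using M by simp
    ultimately have "1 + \<bar>t\<bar> \<le> (1 + M) * (1 + norm y)" by linarith
    then have "(1 + \<bar>t\<bar>)^2 \<le> ((1 + M) * (1 + norm y))^2" by (intro power_mono) auto
    moreover have "1 + t^2 \<le> (1 + \<bar>t\<bar>)^2" by (simp add: power2_eq_square algebra_simps)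
    ultimately have sq: "1 + t^2 \<le> (1 + M)^2 * (1 + norm y)^2" by (simp add: power_mult_distrib)
    have "inverse ((1 + M)^2 * (1 + norm y)^2) \<le> inverse (1 + t^2)"
      using sq by (intro le_imp_inverse_le) (auto simp: add_pos_nonneg)
    then have mono: "(1 + M)^2 * inverse ((1 + M)^2 * (1 + norm y)^2) \<le> (1 + M)^2 * inverse (1 + t^2)"
      by (intro mult_left_mono) auto
    have cancel: "(1 + M)^2 * inverse ((1 + M)^2 * (1 + norm y)^2) = inverse ((1 + norm y)^2)"
      using M by (simp add: inverse_mult_distrib)
    have quad: "inverse ((1 + norm y)^2) \<le> (1 + M)^2 * inverse (1 + t^2)"
      using mono unfolding cancel .
    have "(1 + norm y) powr (-\<mu>) \<le> (1 + norm y) powr (-2)"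
      using mu by (intro powr_mono) auto
    also have "\<dots> = inverse ((1 + norm y)^2)"
      using pos by (simp add: powr_minus powr_realpow)
    finally have decay: "(1 + norm y) powr (-\<mu>) \<le> inverse ((1 + norm y)^2)" .
    have "norm (B y) \<le> \<bar>C\<bar> * (1 + norm y) powr (-\<mu>)"
      using B_dec y y_def by (smt (verit) mult_right_mono powr_ge_zero)
    also have "\<dots> \<le> \<bar>C\<bar> * ((1 + M)^2 * inverse (1 + t^2))"
      using decay quad by (intro mult_left_mono) auto
    finally show ?thesis unfolding h_def y_def by (simp add: mult.assoc)
  qed
  ultimately show ?thesis by blast
qed

lemma integrable_cross3_along_line:
  fixes B :: "real^3 \<Rightarrow> real^3"
  assumes v: "norm v = 1" and Bm[measurable]: "B \<in> borel_measurable borel"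
    and h: "integrable lborel h" and bound: "\<And>t. norm (B (x + t *\<^sub>R v)) \<le> h t"
  shows "integrable lborel (\<lambda>t. cross3 v (B (x + t *\<^sub>R v)))"
proof (rule Bochner_Integration.integrable_bound[OF h])
  have [measurable]: "(\<lambda>y. cross3 v (B y)) \<in> borel_measurable borel"
    by (rule borel_measurable_cross3[OF Bm])
  show "(\<lambda>t. cross3 v (B (x + t *\<^sub>R v))) \<in> borel_measurable lborel" by measurable
  have "norm (cross3 v (B (x + t *\<^sub>R v))) \<le> h t" for t
    using norm_cross3_le[of v "B (x + t *\<^sub>R v)"] bound[of t] v by simp
  then show "AE t in lborel. norm (cross3 v (B (x + t *\<^sub>R v))) \<le> norm (h t)"
    by (auto intro!: AE_I2 order.trans[OF _ abs_ge_self])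
qed

text \<open>The boundary term truncated to |t| <= R, computed by Fubini and the fundamental theorem of
  calculus along v.\<close>

lemma truncated_boundary_term_fubini:
  fixes a \<phi> :: "real^3 \<Rightarrow> real" and v :: "real^3"
  assumes a_meas[measurable]: "a \<in> borel_measurable borel" and a_bdd: "\<And>y. \<bar>a y\<bar> \<le> C"
    and sm: "smooth3 \<phi>" and cS: "compact (tsupport3 \<phi>)" and R: "R \<ge> 0"
  shows "(\<integral>t. indicator {-R..R} t * (\<integral>x. a (x + t *\<^sub>R v) * (grad3 \<phi> x \<bullet> v) \<partial>lborel) \<partial>lborel)
       = (\<integral>y. a y * (\<phi> (y + R *\<^sub>R v) - \<phi> (y - R *\<^sub>R v)) \<partial>lborel)"
proof -
  define S where "S = tsupport3 \<phi>"
  define Dv where "Dv = (\<lambda>x. grad3 \<phi> x \<bullet> v)"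
  have Dv_cont: "continuous_on UNIV Dv" unfolding Dv_def by (rule smooth3_directional_continuous[OF sm])
  have Dv_zero: "Dv x = 0" if "x \<notin> S" for x
    using that unfolding Dv_def S_def by (simp add: grad3_vanishes_outside_tsupport)
  have [measurable]: "Dv \<in> borel_measurable borel"
    using Dv_cont by (rule borel_measurable_continuous_onI)
  obtain bDv where bDv: "bDv \<ge> 0" "\<And>x. \<bar>Dv x\<bar> \<le> bDv"
    using bounded_compact_support[OF Dv_cont cS[folded S_def] Dv_zero] by blast
  have C: "C \<ge> 0" using a_bdd[of 0] by linarith
  define W where "W = (\<lambda>p::(real^3) \<times> real. fst p + snd p *\<^sub>R v) ` (S \<times> {-R..R})"
  have "compact W" unfolding W_def S_def
    by (intro compact_continuous_image compact_Times cS compact_Icc continuous_intros)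
  then have W_int: "integrable lborel (\<lambda>y. C * bDv * indicator W y)"
    using emeasure_compact_finite borel_closed[OF compact_imp_closed]
    by (intro integrable_mult_right integrable_real_indicator) auto
  define G where "G = (\<lambda>t (y::real^3). indicator {-R..R} t * (a y * Dv (y - t *\<^sub>R v)))"
  have Gm: "case_prod G \<in> borel_measurable (lborel \<Otimes>\<^sub>M lborel)" unfolding G_def by measurable
  have Gb: "\<bar>G t y\<bar> \<le> indicator {-R..R} t * \<bar>C * bDv * indicator W y\<bar>" for t y
  proof (cases "t \<in> {-R..R} \<and> y - t *\<^sub>R v \<in> S")
    case True
    then have "y \<in> W" unfolding W_def by (auto intro!: image_eqI[of _ _ "(y - t *\<^sub>R v, t)"])
    moreover have "\<bar>a y * Dv (y - t *\<^sub>R v)\<bar> \<le> C * bDv"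
      unfolding abs_mult using a_bdd bDv C by (intro mult_mono) auto
    ultimately show ?thesis using True C bDv by (simp add: G_def)
  qed (auto simp: G_def Dv_zero)
  have inner_x: "(\<integral>y. G t y \<partial>lborel) = indicator {-R..R} t * (\<integral>x. a (x + t *\<^sub>R v) * Dv x \<partial>lborel)" for t
  proof -
    have "(\<integral>y. a y * Dv (y - t *\<^sub>R v) \<partial>lborel)
        = (\<integral>x. a (t *\<^sub>R v + x) * Dv (t *\<^sub>R v + x - t *\<^sub>R v) \<partial>lborel)"
      by (rule integral_translate) measurable
    then show ?thesis unfolding G_def by (simp add: add.commute)
  qed
  have inner_t: "(\<integral>t. G t y \<partial>lborel) = a y * (\<phi> (y + R *\<^sub>R v) - \<phi> (y - R *\<^sub>R v))" for y
    using integral_directional_derivative[OF sm R, of y v]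
    unfolding G_def Dv_def by (simp add: mult.left_commute)
  show ?thesis
    using fubini_product_majorant(3)[OF Gm integrable_indicator_Icc W_int Gb]
    unfolding inner_x inner_t Dv_def .
qed

lemma truncated_boundary_term:
  fixes a \<phi> :: "real^3 \<Rightarrow> real" and v :: "real^3"
  assumes a_meas[measurable]: "a \<in> borel_measurable borel" and a_bdd: "\<And>y. \<bar>a y\<bar> \<le> C"
    and sm: "smooth3 \<phi>" and cS: "compact (tsupport3 \<phi>)" and R: "R \<ge> 0"
  shows "(\<integral>t. indicator {-R..R} t * (\<integral>x. a (x + t *\<^sub>R v) * (grad3 \<phi> x \<bullet> v) \<partial>lborel) \<partial>lborel)
       = (\<integral>x. a (x - R *\<^sub>R v) * \<phi> x \<partial>lborel) - (\<integral>x. a (x + R *\<^sub>R v) * \<phi> x \<partial>lborel)"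
proof -
  have [measurable]: "\<phi> \<in> borel_measurable borel"
    using smooth3_continuous[OF sm] by (rule borel_measurable_continuous_onI)
  have shift: "(\<integral>y. a y * \<phi> (y + c *\<^sub>R v) \<partial>lborel) = (\<integral>x. a (x - c *\<^sub>R v) * \<phi> x \<partial>lborel)" for c
  proof -
    have "(\<integral>y. a y * \<phi> (y + c *\<^sub>R v) \<partial>lborel)
        = (\<integral>x. a (- c *\<^sub>R v + x) * \<phi> (- c *\<^sub>R v + x + c *\<^sub>R v) \<partial>lborel)"
      by (rule integral_translate) measurable
    then show ?thesis by simp
  qed
  have shifted_int: "integrable lborel (\<lambda>y. a y * \<phi> (y + c *\<^sub>R v))" for c
  proof (rule integrable_bounded_factor)
    have "integrable lborel (\<lambda>y. \<phi> (c *\<^sub>R v + y))"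
      using integrable_translate[of \<phi>] smooth3_compact_support_integrable(1)[OF sm cS] by simp
    then show "integrable lborel (\<lambda>y. \<phi> (y + c *\<^sub>R v))" by (simp add: add.commute)
    show "a \<in> borel_measurable lborel" by measurable
  qed (rule a_bdd)
  have "(\<integral>t. indicator {-R..R} t * (\<integral>x. a (x + t *\<^sub>R v) * (grad3 \<phi> x \<bullet> v) \<partial>lborel) \<partial>lborel)
      = (\<integral>y. a y * \<phi> (y + R *\<^sub>R v) \<partial>lborel) - (\<integral>y. a y * \<phi> (y + (- R) *\<^sub>R v) \<partial>lborel)"
    unfolding truncated_boundary_term_fubini[OF a_meas a_bdd sm cS R]
    using shifted_int[of R] shifted_int[of "-R"] by (simp add: algebra_simps)
  then show ?thesis unfolding shift by simp
qed

lemma shifted_pairing_decay: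
  fixes a \<phi> :: "real^3 \<Rightarrow> real"
  assumes v: "norm v = 1" and a_meas[measurable]: "a \<in> borel_measurable borel"
    and a_dec: "\<And>y. \<bar>a y\<bar> \<le> C / (1 + norm y)"
    and \<phi>_int: "integrable lborel \<phi>" and \<phi>_supp: "\<And>x. \<phi> x \<noteq> 0 \<Longrightarrow> norm x \<le> M"
    and c: "\<bar>c\<bar> \<ge> M"
  shows "\<bar>\<integral>x. a (x + c *\<^sub>R v) * \<phi> x \<partial>lborel\<bar> \<le> C / (1 + (\<bar>c\<bar> - M)) * (\<integral>x. \<bar>\<phi> x\<bar> \<partial>lborel)"
proof -
  have a_bdd: "\<bar>a y\<bar> \<le> C" for y
    using inverse_decay_imp_bounded(2)[of "a y" C y] a_dec[of y] by simp
  have C: "C \<ge> 0" using inverse_decay_imp_bounded(1)[of "a 0" C 0] a_dec[of 0] by simp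
  have pos: "0 < 1 + (\<bar>c\<bar> - M)" using c by simp
  have pointwise: "\<bar>a (x + c *\<^sub>R v) * \<phi> x\<bar> \<le> C / (1 + (\<bar>c\<bar> - M)) * \<bar>\<phi> x\<bar>" for x
  proof (cases "\<phi> x = 0")
    case False
    have "\<bar>c\<bar> = norm (c *\<^sub>R v)" using v by simp
    also have "\<dots> \<le> norm (x + c *\<^sub>R v) + norm x" using norm_triangle_ineq4[of "x + c *\<^sub>R v" x] by simp
    finally have "norm (x + c *\<^sub>R v) \<ge> \<bar>c\<bar> - M" using \<phi>_supp[OF False] by linarith
    then have "C / (1 + norm (x + c *\<^sub>R v)) \<le> C / (1 + (\<bar>c\<bar> - M))"
      using C pos by (intro divide_left_mono) auto
    then have "\<bar>a (x + c *\<^sub>R v)\<bar> \<le> C / (1 + (\<bar>c\<bar> - M))" using a_dec order.trans by blast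
    then show ?thesis unfolding abs_mult by (intro mult_right_mono) auto
  qed simp
  have "\<bar>\<integral>x. a (x + c *\<^sub>R v) * \<phi> x \<partial>lborel\<bar> \<le> (\<integral>x. C / (1 + (\<bar>c\<bar> - M)) * \<bar>\<phi> x\<bar> \<partial>lborel)"
  proof (rule integral_abs_bound_integral)
    show "integrable lborel (\<lambda>x. a (x + c *\<^sub>R v) * \<phi> x)"
      by (rule integrable_bounded_factor[OF \<phi>_int]) (measurable, rule a_bdd)
  qed (use \<phi>_int pointwise in auto)
  then show ?thesis by simp
qed

text \<open>The boundary term vanishes: its truncations converge to it and are O(1/R).\<close>

lemma boundary_term_vanishes:
  fixes a \<phi> :: "real^3 \<Rightarrow> real" and v :: "real^3"
  assumes v: "norm v = 1" and a_meas[measurable]: "a \<in> borel_measurable borel"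
    and a_dec: "\<And>y. \<bar>a y\<bar> \<le> C / (1 + norm y)"
    and sm: "smooth3 \<phi>" and cS: "compact (tsupport3 \<phi>)"
    and T_int: "integrable lborel (\<lambda>t. \<integral>x. a (x + t *\<^sub>R v) * (grad3 \<phi> x \<bullet> v) \<partial>lborel)"
  shows "(\<integral>t. (\<integral>x. a (x + t *\<^sub>R v) * (grad3 \<phi> x \<bullet> v) \<partial>lborel) \<partial>lborel) = 0"
proof -
  define T where "T = (\<lambda>t. \<integral>x. a (x + t *\<^sub>R v) * (grad3 \<phi> x \<bullet> v) \<partial>lborel)"
  define J where "J = (\<lambda>n::nat. \<integral>t. indicator {- real n..real n} t * T t \<partial>lborel)"
  define P where "P = (\<integral>x. \<bar>\<phi> x\<bar> \<partial>lborel)"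
  obtain M0 where "\<forall>x\<in>tsupport3 \<phi>. norm x \<le> M0"
    using compact_imp_bounded[OF cS] bounded_iff by metis
  then obtain M where M: "M \<ge> 0" and \<phi>_supp: "\<And>x. \<phi> x \<noteq> 0 \<Longrightarrow> norm x \<le> M"
    using tsupport3_vanishes by (metis max.cobounded2 max.coboundedI1)
  have a_bdd: "\<bar>a y\<bar> \<le> C" for y
    using inverse_decay_imp_bounded(2)[of "a y" C y] a_dec[of y] by simp
  have C: "C \<ge> 0" using inverse_decay_imp_bounded(1)[of "a 0" C 0] a_dec[of 0] by simp
  note \<phi>_int = smooth3_compact_support_integrable(1)[OF sm cS]
  note decay = shifted_pairing_decay[OF v a_meas a_dec \<phi>_int \<phi>_supp]
  have J_bound: "\<bar>J n\<bar> \<le> 2 * C * P / (1 + (real n - M))" if n: "real n \<ge> M" for n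
  proof -
    have "J n = (\<integral>x. a (x + (- real n) *\<^sub>R v) * \<phi> x \<partial>lborel) - (\<integral>x. a (x + real n *\<^sub>R v) * \<phi> x \<partial>lborel)"
      unfolding J_def T_def using truncated_boundary_term[OF a_meas a_bdd sm cS, of "real n" v] by simp
    then have "\<bar>J n\<bar> \<le> C / (1 + (real n - M)) * P + C / (1 + (real n - M)) * P"
      using decay[of "- real n"] decay[of "real n"] n unfolding P_def by simp
    then show ?thesis by simp
  qed
  have "J \<longlonglongrightarrow> (\<integral>t. T t \<partial>lborel)"
    unfolding J_def
  proof (rule integral_dominated_convergence[where w="\<lambda>t. \<bar>T t\<bar>"])
    show "AE t in lborel. (\<lambda>n. indicator {- real n..real n} t * T t) \<longlonglongrightarrow> T t"
    proof (rule AE_I2, rule tendsto_eventually)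
      fix t :: real
      obtain N :: nat where "\<bar>t\<bar> \<le> real N" using real_arch_simple by blast
      then show "\<forall>\<^sub>F n in sequentially. indicator {- real n..real n} t * T t = T t"
        unfolding eventually_sequentially by (intro exI[of _ N]) (auto simp: indicator_def)
    qed
  qed (use T_int in \<open>auto simp: T_def indicator_def\<close>)
  moreover have "J \<longlonglongrightarrow> 0"
  proof (rule Lim_null_comparison)
    obtain N :: nat where "M \<le> real N" using real_arch_simple by blast
    then show "\<forall>\<^sub>F n in sequentially. norm (J n) \<le> 2 * C * P / (1 + (real n - M))"
      unfolding eventually_sequentially using J_bound by (intro exI[of _ N]) auto
    have "LIM n sequentially. (1 - M) + real n :> at_top"
      by (rule filterlim_tendsto_add_at_top[OF tendsto_const filterlim_real_sequentially])
    then have "LIM n sequentially. 1 + (real n - M) :> at_infinity"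
      by (intro filterlim_at_top_imp_at_infinity) (simp add: algebra_simps)
    then show "(\<lambda>n. 2 * C * P / (1 + (real n - M))) \<longlonglongrightarrow> 0"
      by (rule tendsto_divide_0[OF tendsto_const])
  qed
  ultimately show ?thesis unfolding T_def by (rule LIMSEQ_unique)
qed

lemma potential_term_fubini:
  fixes \<Lambda> :: "(real^3) set" and A A1 :: "real^3 \<Rightarrow> real^3" and \<phi> :: "real^3 \<Rightarrow> real"
    and v :: "real^3"
  assumes A1m[measurable]: "A1 \<in> borel_measurable borel" and A1eq: "\<And>y. y \<in> \<Lambda> \<Longrightarrow> A1 y = A y"
    and sm: "smooth3 \<phi>" and cS: "compact (tsupport3 \<phi>)"
    and on_lines: "\<And>x t. x \<in> tsupport3 \<phi> \<Longrightarrow> x + t *\<^sub>R v \<in> \<Lambda>"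
    and hA: "integrable lborel hA" "\<And>x t. x \<in> tsupport3 \<phi> \<Longrightarrow> \<bar>v \<bullet> A (x + t *\<^sub>R v)\<bar> \<le> hA t"
  shows "integrable lborel (\<lambda>t. \<integral>x. (v \<bullet> A1 (x + t *\<^sub>R v)) * pd k \<phi> x \<partial>lborel)"
    and "integrable lborel (\<lambda>x. pd k \<phi> x * (\<integral>t. v \<bullet> A (x + t *\<^sub>R v) \<partial>lborel))"
    and "(\<integral>t. (\<integral>x. (v \<bullet> A1 (x + t *\<^sub>R v)) * pd k \<phi> x \<partial>lborel) \<partial>lborel)
       = (\<integral>x. pd k \<phi> x * (\<integral>t. v \<bullet> A (x + t *\<^sub>R v) \<partial>lborel) \<partial>lborel)"
proof -
  define D where "D = pd k \<phi>"
  define G where "G = (\<lambda>t x. (v \<bullet> A1 (x + t *\<^sub>R v)) * D x)"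
  have [measurable]: "D \<in> borel_measurable borel"
    unfolding D_def by (intro borel_measurable_continuous_onI smooth3_pd_continuous sm)
  have D_zero: "D x = 0" if "x \<notin> tsupport3 \<phi>" for x
    using that unfolding D_def by (rule pd_vanishes_outside_tsupport)
  have G_meas: "case_prod G \<in> borel_measurable (lborel \<Otimes>\<^sub>M lborel)"
    unfolding G_def by measurable
  have G_bound: "\<bar>G t x\<bar> \<le> hA t * \<bar>D x\<bar>" for t x
  proof (cases "x \<in> tsupport3 \<phi>")
    case True
    then have "\<bar>v \<bullet> A1 (x + t *\<^sub>R v)\<bar> \<le> hA t" using A1eq[OF on_lines] hA(2) by simp
    then show ?thesis unfolding G_def abs_mult by (intro mult_right_mono) auto
  qed (simp add: G_def D_zero)
  have "integrable lborel D"
    unfolding D_def using smooth3_compact_support_integrable(2)[OF sm cS] .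
  note fubini = fubini_product_majorant[OF G_meas hA(1) this G_bound]
  have inner_t: "(\<integral>t. G t x \<partial>lborel) = D x * (\<integral>t. v \<bullet> A (x + t *\<^sub>R v) \<partial>lborel)" for x
  proof (cases "x \<in> tsupport3 \<phi>")
    case True
    then show ?thesis using A1eq[OF on_lines] unfolding G_def by (simp add: mult.commute)
  qed (simp add: G_def D_zero)
  show "integrable lborel (\<lambda>t. \<integral>x. (v \<bullet> A1 (x + t *\<^sub>R v)) * pd k \<phi> x \<partial>lborel)"
    using fubini(1) unfolding G_def D_def .
  show "integrable lborel (\<lambda>x. pd k \<phi> x * (\<integral>t. v \<bullet> A (x + t *\<^sub>R v) \<partial>lborel))"
    using fubini(2) unfolding inner_t D_def .
  show "(\<integral>t. (\<integral>x. (v \<bullet> A1 (x + t *\<^sub>R v)) * pd k \<phi> x \<partial>lborel) \<partial>lborel)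
       = (\<integral>x. pd k \<phi> x * (\<integral>t. v \<bullet> A (x + t *\<^sub>R v) \<partial>lborel) \<partial>lborel)"
    using fubini(3) unfolding inner_t unfolding G_def D_def .
qed

lemma field_term_fubini:
  fixes B :: "real^3 \<Rightarrow> real^3" and \<phi> :: "real^3 \<Rightarrow> real" and v :: "real^3"
  assumes v: "norm v = 1" and Bm[measurable]: "B \<in> borel_measurable borel"
    and sm: "smooth3 \<phi>" and cS: "compact (tsupport3 \<phi>)"
    and hB: "integrable lborel hB" "\<And>x t. x \<in> tsupport3 \<phi> \<Longrightarrow> norm (B (x + t *\<^sub>R v)) \<le> hB t"
  shows "integrable lborel (\<lambda>t. \<integral>x. \<phi> x * (cross3 v (B (x + t *\<^sub>R v)) $ k) \<partial>lborel)"
    and "integrable lborel (\<lambda>x. \<phi> x * (\<integral>t. cross3 v (B (x + t *\<^sub>R v)) \<partial>lborel) $ k)"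
    and "(\<integral>t. (\<integral>x. \<phi> x * (cross3 v (B (x + t *\<^sub>R v)) $ k) \<partial>lborel) \<partial>lborel)
       = (\<integral>x. \<phi> x * (\<integral>t. cross3 v (B (x + t *\<^sub>R v)) \<partial>lborel) $ k \<partial>lborel)"
proof -
  define G where "G = (\<lambda>t x. \<phi> x * (cross3 v (B (x + t *\<^sub>R v)) $ k))"
  have [measurable]: "\<phi> \<in> borel_measurable borel"
    by (intro borel_measurable_continuous_onI smooth3_continuous sm)
  have [measurable]: "(\<lambda>y. cross3 v (B y) $ k) \<in> borel_measurable borel"
    by (intro borel_measurable_vec_nth_comp borel_measurable_cross3 Bm)
  have G_meas: "case_prod G \<in> borel_measurable (lborel \<Otimes>\<^sub>M lborel)"
    unfolding G_def by measurable
  have G_bound: "\<bar>G t x\<bar> \<le> hB t * \<bar>\<phi> x\<bar>" for t x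
  proof (cases "x \<in> tsupport3 \<phi>")
    case True
    have "\<bar>cross3 v (B (x + t *\<^sub>R v)) $ k\<bar> \<le> norm (B (x + t *\<^sub>R v))"
      using component_le_norm_cart[of "cross3 v (B (x + t *\<^sub>R v))" k] norm_cross3_le[of v] v
      by (smt (verit) mult_cancel_right1)
    also have "\<dots> \<le> hB t" using hB(2) True by blast
    finally show ?thesis unfolding G_def abs_mult by (subst mult.commute) (intro mult_right_mono, auto)
  qed (simp add: G_def tsupport3_vanishes)
  note fubini = fubini_product_majorant[OF G_meas hB(1) smooth3_compact_support_integrable(1)[OF sm cS] G_bound]
  have inner_t: "(\<integral>t. G t x \<partial>lborel) = \<phi> x * (\<integral>t. cross3 v (B (x + t *\<^sub>R v)) \<partial>lborel) $ k" for x
  proof (cases "x \<in> tsupport3 \<phi>")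
    case True
    then have line: "integrable lborel (\<lambda>t. cross3 v (B (x + t *\<^sub>R v)))"
      using hB by (intro integrable_cross3_along_line[OF v Bm hB(1)]) blast
    show ?thesis unfolding G_def integral_vec_nth[OF line] by simp
  qed (simp add: G_def tsupport3_vanishes)
  show "integrable lborel (\<lambda>t. \<integral>x. \<phi> x * (cross3 v (B (x + t *\<^sub>R v)) $ k) \<partial>lborel)"
    using fubini(1) unfolding G_def .
  show "integrable lborel (\<lambda>x. \<phi> x * (\<integral>t. cross3 v (B (x + t *\<^sub>R v)) \<partial>lborel) $ k)"
    using fubini(2) unfolding inner_t .
  show "(\<integral>t. (\<integral>x. \<phi> x * (cross3 v (B (x + t *\<^sub>R v)) $ k) \<partial>lborel) \<partial>lborel)
       = (\<integral>x. \<phi> x * (\<integral>t. cross3 v (B (x + t *\<^sub>R v)) \<partial>lborel) $ k \<partial>lborel)"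
    using fubini(3) unfolding inner_t unfolding G_def .
qed

text \<open>The k-th coordinate of the gradient identity: integrate the curl pairing along lines over
  t in R; the boundary term drops out.\<close>

lemma componentwise_identity:
  fixes \<Lambda> :: "(real^3) set" and A A1 B :: "real^3 \<Rightarrow> real^3" and \<phi> :: "real^3 \<Rightarrow> real"
    and v :: "real^3"
  assumes v: "norm v = 1" and dc: "dist_curl \<Lambda> A B"
    and A1m[measurable]: "A1 \<in> borel_measurable borel" and A1eq: "\<And>y. y \<in> \<Lambda> \<Longrightarrow> A1 y = A y"
    and A1_dec: "\<And>y. norm (A1 y) \<le> C / (1 + norm y)"
    and Bm[measurable]: "B \<in> borel_measurable borel"
    and sm: "smooth3 \<phi>" and cS: "compact (tsupport3 \<phi>)"
    and on_lines: "\<And>x t. x \<in> tsupport3 \<phi> \<Longrightarrow> x + t *\<^sub>R v \<in> \<Lambda>"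
    and hA: "integrable lborel hA" "\<And>x t. x \<in> tsupport3 \<phi> \<Longrightarrow> \<bar>v \<bullet> A (x + t *\<^sub>R v)\<bar> \<le> hA t"
    and hB: "integrable lborel hB" "\<And>x t. x \<in> tsupport3 \<phi> \<Longrightarrow> norm (B (x + t *\<^sub>R v)) \<le> hB t"
  shows "integrable lborel (\<lambda>x. pd k \<phi> x * (\<integral>t. v \<bullet> A (x + t *\<^sub>R v) \<partial>lborel))"
    and "integrable lborel (\<lambda>x. \<phi> x * (\<integral>t. cross3 v (B (x + t *\<^sub>R v)) \<partial>lborel) $ k)"
    and "(\<integral>x. pd k \<phi> x * (\<integral>t. v \<bullet> A (x + t *\<^sub>R v) \<partial>lborel) \<partial>lborel)
       = - (\<integral>x. \<phi> x * (\<integral>t. cross3 v (B (x + t *\<^sub>R v)) \<partial>lborel) $ k \<partial>lborel)"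
proof -
  note potential = potential_term_fubini[OF A1m A1eq sm cS on_lines hA, of k]
  note field = field_term_fubini[OF v Bm sm cS hB, of k]
  define P where "P = (\<lambda>t. \<integral>x. (v \<bullet> A1 (x + t *\<^sub>R v)) * pd k \<phi> x \<partial>lborel)"
  define F where "F = (\<lambda>t. \<integral>x. \<phi> x * (cross3 v (B (x + t *\<^sub>R v)) $ k) \<partial>lborel)"
  define T where "T = (\<lambda>t. \<integral>x. A1 (x + t *\<^sub>R v) $ k * (grad3 \<phi> x \<bullet> v) \<partial>lborel)"
  have A1_bdd: "norm (A1 y) \<le> C" for y by (rule inverse_decay_imp_bounded(2)[OF A1_dec])
  have A1k_dec: "\<bar>A1 y $ k\<bar> \<le> C / (1 + norm y)" for y
    using A1_dec[of y] component_le_norm_cart[of "A1 y" k] by simp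
  have pairing: "P t - T t = - F t" for t
    using curl_pairing_on_line[OF dc sm cS on_lines A1m A1eq A1_bdd Bm v, of t k]
    unfolding P_def F_def T_def by simp
  then have T_eq: "T = (\<lambda>t. P t + F t)" by (auto simp: fun_eq_iff algebra_simps)
  have T_int: "integrable lborel T"
    unfolding T_eq using potential(1) field(1) unfolding P_def F_def by simp
  have "(\<integral>t. T t \<partial>lborel) = 0"
    using boundary_term_vanishes[OF v borel_measurable_vec_nth_comp[OF A1m] A1k_dec sm cS] T_int
    unfolding T_def by simp
  moreover have "(\<integral>t. T t \<partial>lborel) = (\<integral>t. P t \<partial>lborel) + (\<integral>t. F t \<partial>lborel)"
    unfolding T_eq using potential(1) field(1) unfolding P_def F_def
    by (rule Bochner_Integration.integral_add)
  ultimately have "(\<integral>t. P t \<partial>lborel) = - (\<integral>t. F t \<partial>lborel)" by simp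
  then show "(\<integral>x. pd k \<phi> x * (\<integral>t. v \<bullet> A (x + t *\<^sub>R v) \<partial>lborel) \<partial>lborel)
       = - (\<integral>x. \<phi> x * (\<integral>t. cross3 v (B (x + t *\<^sub>R v)) \<partial>lborel) $ k \<partial>lborel)"
    using potential(3) field(3) unfolding P_def F_def by simp
  show "integrable lborel (\<lambda>x. pd k \<phi> x * (\<integral>t. v \<bullet> A (x + t *\<^sub>R v) \<partial>lborel))"
    by (rule potential(2))
  show "integrable lborel (\<lambda>x. \<phi> x * (\<integral>t. cross3 v (B (x + t *\<^sub>R v)) \<partial>lborel) $ k)"
    by (rule field(2))
qed

lemma weak_gradient_from_components:
  fixes f \<phi> :: "real^3 \<Rightarrow> real" and G :: "real^3 \<Rightarrow> real^3"
  assumes int_f: "\<And>k. integrable lborel (\<lambda>x. pd k \<phi> x * f x)"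
    and int_G: "\<And>k. integrable lborel (\<lambda>x. \<phi> x * G x $ k)"
    and identity: "\<And>k. (\<integral>x. pd k \<phi> x * f x \<partial>lborel) = - (\<integral>x. \<phi> x * G x $ k \<partial>lborel)"
  shows "(\<integral>x. f x *\<^sub>R grad3 \<phi> x \<partial>lborel) = - (\<integral>x. \<phi> x *\<^sub>R G x \<partial>lborel)"
proof -
  have "(\<integral>x. f x *\<^sub>R grad3 \<phi> x \<partial>lborel) = (\<Sum>k\<in>UNIV. (\<integral>x. pd k \<phi> x * f x \<partial>lborel) *\<^sub>R axis k 1)"
    using integral_by_components[of lborel "\<lambda>x. f x *\<^sub>R grad3 \<phi> x"] int_f
    by (simp add: grad3_def mult.commute)
  moreover have "(\<integral>x. \<phi> x *\<^sub>R G x \<partial>lborel) = (\<Sum>k\<in>UNIV. (\<integral>x. \<phi> x * G x $ k \<partial>lborel) *\<^sub>R axis k 1)"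
    using integral_by_components[of lborel "\<lambda>x. \<phi> x *\<^sub>R G x"] int_G by simp
  ultimately show ?thesis by (simp add: identity sum_negf)
qed

lemma line_integrability:
  fixes \<Lambda> :: "(real^3) set" and A B :: "real^3 \<Rightarrow> real^3" and v x :: "real^3"
  assumes v: "norm v = 1" and mu: "\<mu> > 2"
    and A_cont: "continuous_on \<Lambda> A" and A_dec: "\<forall>x\<in>\<Lambda>. norm (A x) \<le> CA / (1 + norm x)"
    and \<omega>_int: "set_integrable lborel {0<..} (radial_sup \<Lambda> A)"
    and Bm[measurable]: "B \<in> borel_measurable borel"
    and B_dec: "\<forall>x\<in>\<Lambda>. norm (B x) \<le> CB * (1 + norm x) powr (-\<mu>)"
    and x: "x \<in> Lambda_dir \<Lambda> v"
  shows "integrable lborel (\<lambda>\<tau>. v \<bullet> A (x + \<tau> *\<^sub>R v))"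
    and "integrable lborel (\<lambda>\<tau>. cross3 v (B (x + \<tau> *\<^sub>R v)))"
proof -
  have on_line: "x + t *\<^sub>R v \<in> \<Lambda>" for t using x unfolding Lambda_dir_def by blast
  obtain hA where hA: "integrable lborel hA" "\<And>t. \<bar>v \<bullet> A (x + t *\<^sub>R v)\<bar> \<le> hA t"
    using potential_line_majorant[OF v norm_ge_zero A_dec \<omega>_int, of x] on_line by blast
  obtain hB where hB: "integrable lborel hB" "\<And>t. norm (B (x + t *\<^sub>R v)) \<le> hB t"
    using field_line_majorant[OF v norm_ge_zero mu B_dec, of x] on_line by blast
  have "continuous_on UNIV (\<lambda>t. A (x + t *\<^sub>R v))"
    by (rule continuous_on_compose2[OF A_cont]) (use on_line in \<open>auto intro!: continuous_intros\<close>)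
  then have "(\<lambda>t. v \<bullet> A (x + t *\<^sub>R v)) \<in> borel_measurable lborel"
    by (auto intro!: borel_measurable_continuous_onI continuous_intros)
  then show "integrable lborel (\<lambda>\<tau>. v \<bullet> A (x + \<tau> *\<^sub>R v))"
    by (rule Bochner_Integration.integrable_bound[OF hA(1)])
       (use hA(2) in \<open>auto intro!: AE_I2 order.trans[OF _ abs_ge_self]\<close>)
  show "integrable lborel (\<lambda>\<tau>. cross3 v (B (x + \<tau> *\<^sub>R v)))"
    by (rule integrable_cross3_along_line[OF v Bm hB])
qed

lemma gradient_identity:
  fixes \<Lambda> :: "(real^3) set" and A B :: "real^3 \<Rightarrow> real^3" and v :: "real^3"
  assumes v: "norm v = 1" and mu: "\<mu> > 2" and open_\<Lambda>: "open \<Lambda>"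
    and A_cont: "continuous_on \<Lambda> A" and A_dec: "\<forall>x\<in>\<Lambda>. norm (A x) \<le> CA / (1 + norm x)"
    and \<omega>_int: "set_integrable lborel {0<..} (radial_sup \<Lambda> A)"
    and Bm[measurable]: "B \<in> borel_measurable borel"
    and B_dec: "\<forall>x\<in>\<Lambda>. norm (B x) \<le> CB * (1 + norm x) powr (-\<mu>)"
    and dc: "dist_curl \<Lambda> A B"
  shows "dist_grad (Lambda_dir \<Lambda> v) (\<lambda>x. \<integral>\<tau>. v \<bullet> A (x + \<tau> *\<^sub>R v) \<partial>lborel)
           (\<lambda>x. \<integral>\<tau>. cross3 v (B (x + \<tau> *\<^sub>R v)) \<partial>lborel)"
  unfolding dist_grad_def
proof (intro allI impI)
  fix \<phi> assume "test_fun (Lambda_dir \<Lambda> v) \<phi>"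
  then have sm: "smooth3 \<phi>" and cS: "compact (tsupport3 \<phi>)"
    and on_lines: "\<And>x t. x \<in> tsupport3 \<phi> \<Longrightarrow> x + t *\<^sub>R v \<in> \<Lambda>"
    unfolding test_fun_def Lambda_dir_def by auto
  obtain M0 where "\<forall>x\<in>tsupport3 \<phi>. norm x \<le> M0"
    using compact_imp_bounded[OF cS] bounded_iff by metis
  then obtain M where M: "M \<ge> 0" "\<And>x. x \<in> tsupport3 \<phi> \<Longrightarrow> norm x \<le> M"
    by (metis max.cobounded2 max.coboundedI1)
  obtain hA where hA: "integrable lborel hA"
    "\<And>x t. x \<in> tsupport3 \<phi> \<Longrightarrow> \<bar>v \<bullet> A (x + t *\<^sub>R v)\<bar> \<le> hA t"
    using potential_line_majorant[OF v M(1) A_dec \<omega>_int] M(2) on_lines by meson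
  obtain hB where hB: "integrable lborel hB"
    "\<And>x t. x \<in> tsupport3 \<phi> \<Longrightarrow> norm (B (x + t *\<^sub>R v)) \<le> hB t"
    using field_line_majorant[OF v M(1) mu B_dec] M(2) on_lines by meson
  define A1 where "A1 = (\<lambda>y. indicator \<Lambda> y *\<^sub>R A y)"
  have A1m: "A1 \<in> borel_measurable borel"
    unfolding A1_def by (rule borel_measurable_continuous_on_indicator[OF open_\<Lambda>[THEN borel_open] A_cont])
  have A1eq: "\<And>y. y \<in> \<Lambda> \<Longrightarrow> A1 y = A y" unfolding A1_def by simp
  have A1_dec: "norm (A1 y) \<le> \<bar>CA\<bar> / (1 + norm y)" for y
  proof (cases "y \<in> \<Lambda>")
    case True
    then have "norm (A1 y) \<le> CA / (1 + norm y)" using A_dec A1eq by simp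
    also have "\<dots> \<le> \<bar>CA\<bar> / (1 + norm y)" by (intro divide_right_mono) (auto simp: add_nonneg_nonneg)
    finally show ?thesis .
  qed (simp add: A1_def add_nonneg_nonneg)
  note identity = componentwise_identity[OF v dc A1m A1eq A1_dec Bm sm cS on_lines hA hB]
  show "(\<integral>x. (\<integral>\<tau>. v \<bullet> A (x + \<tau> *\<^sub>R v) \<partial>lborel) *\<^sub>R grad3 \<phi> x \<partial>lborel)
      = - (\<integral>x. \<phi> x *\<^sub>R (\<integral>\<tau>. cross3 v (B (x + \<tau> *\<^sub>R v)) \<partial>lborel) \<partial>lborel)"
    by (rule weak_gradient_from_components[OF identity])
qed

text \<open>The theorem: the hypotheses of Assumption 5.1 supply all ingredients of the two lemmas above.\<close>

theorem lemma6p2: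
  fixes K :: "(real^3) set" and N :: nat and gam :: "nat \<Rightarrow> real \<Rightarrow> real^3"
    and \<Phi> :: "nat \<Rightarrow> real" and B A :: "real^3 \<Rightarrow> real^3" and \<mu> :: real and v :: "real^3"
  assumes "smooth_boundary_domain K"
    and "\<forall>j<N. valid_path (gam j) \<and> pathfinish (gam j) = pathstart (gam j)
               \<and> path_image (gam j) \<subseteq> - K"
    and "magnetic_ok (- K) B \<mu>"
    and "A \<in> vpot_class (- K) N gam \<Phi> B"
    and "norm v = 1"
  shows "(\<forall>x\<in>Lambda_dir (- K) v.
            integrable lborel (\<lambda>\<tau>. v \<bullet> A (x + \<tau> *\<^sub>R v)) \<and>
            integrable lborel (\<lambda>\<tau>. cross3 v (B (x + \<tau> *\<^sub>R v))))
       \<and> dist_grad (Lambda_dir (- K) v)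
           (\<lambda>x. \<integral>\<tau>. v \<bullet> A (x + \<tau> *\<^sub>R v) \<partial>lborel)
           (\<lambda>x. \<integral>\<tau>. cross3 v (B (x + \<tau> *\<^sub>R v)) \<partial>lborel)"
proof -
  have "open (- K)"
    using assms(1) compact_imp_closed unfolding smooth_boundary_domain_def by blast
  have B_meas: "B \<in> borel_measurable lborel" and mu: "\<mu> > 2"
    and "\<exists>C. \<forall>x\<in>- K. norm (B x) \<le> C * (1 + norm x) powr (-\<mu>)"
    using assms(3) unfolding magnetic_ok_def by blast+
  then obtain CB where B_dec: "\<forall>x\<in>- K. norm (B x) \<le> CB * (1 + norm x) powr (-\<mu>)" by blast
  have A_cont: "continuous_on (closure (- K)) A"
    and "\<exists>C. \<forall>x\<in>closure (- K). norm (A x) \<le> C / (1 + norm x)"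
    and \<omega>_int: "set_integrable lborel {0<..} (radial_sup (- K) A)"
    and dc: "dist_curl (- K) A B"
    using assms(4) unfolding vpot_class_def radial_sup_def[abs_def] by blast+
  then obtain CA where "\<forall>x\<in>closure (- K). norm (A x) \<le> CA / (1 + norm x)" by blast
  then have A_dec: "\<forall>x\<in>- K. norm (A x) \<le> CA / (1 + norm x)" using closure_subset by blast
  have "continuous_on (- K) A" using A_cont closure_subset continuous_on_subset by blast
  note hyps = assms(5) mu this A_dec \<omega>_int B_meas[simplified] B_dec
  show ?thesis
    using line_integrability[OF hyps] gradient_identity[OF assms(5) mu \<open>open (- K)\<close> _ A_dec \<omega>_int _ B_dec dc]
      \<open>continuous_on (- K) A\<close> B_meas by auto
qed

end
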